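(* Let $M\colon[0,\infty)\times[0,\infty)\to[0,\infty)$ be symmetric and moderately increasing, suppose $\rho_M(x,y)=\dfrac{|x-y|}{M(|x|,|y|)}$ is a metric on $\mathbb{R}^n$, and suppose that for each $x$ the function $M(x,\cdot)$ is of class $C^2$ on $(0,\infty)$. Then $\rho_M$ is locally convex.
   Context: Convention $0/0=0$. A function $f\colon[0,\infty)\to[0,\infty)$ is moderately increasing if it is increasing and $f(t)/t$ is decreasing; $M$ is moderately increasing if $M(x,\cdot)$ and $M(\cdot,x)$ are moderately increasing for each fixed $x$. A metric $d$ is locally convex if for every $x$ there is $r_0>0$ such that the ball $\{y: d(x,y)<r\}$ is (Euclidean) convex for every $0<r<r_0$. *)

theory Defs
  imports "HOL-Analysis.Analysis"
begin

definition moderately_increasing :: "(real \<Rightarrow> real) \<Rightarrow> bool" where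
  "moderately_increasing f \<longleftrightarrow>
     (\<forall>s t. 0 \<le> s \<and> s \<le> t \<longrightarrow> f s \<le> f t) \<and>
     (\<forall>s t. 0 < s \<and> s \<le> t \<longrightarrow> f t / t \<le> f s / s)"

definition moderately_increasing2 :: "(real \<Rightarrow> real \<Rightarrow> real) \<Rightarrow> bool" where
  "moderately_increasing2 M \<longleftrightarrow>
     (\<forall>x\<ge>0. moderately_increasing (\<lambda>t. M x t) \<and> moderately_increasing (\<lambda>t. M t x))"

definition rhoM :: "(real \<Rightarrow> real \<Rightarrow> real) \<Rightarrow> 'a::euclidean_space \<Rightarrow> 'a \<Rightarrow> real" where
  "rhoM M x y = norm (x - y) / M (norm x) (norm y)"

definition is_metric :: "('a \<Rightarrow> 'a \<Rightarrow> real) \<Rightarrow> bool" where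
  "is_metric d \<longleftrightarrow>
     (\<forall>x y. 0 \<le> d x y) \<and> (\<forall>x y. d x y = 0 \<longleftrightarrow> x = y) \<and>
     (\<forall>x y. d x y = d y x) \<and> (\<forall>x y z. d x z \<le> d x y + d y z)"

definition C2_on :: "real set \<Rightarrow> (real \<Rightarrow> real) \<Rightarrow> bool" where
  "C2_on S f \<longleftrightarrow> (\<exists>f' f''. (\<forall>t\<in>S. (f has_real_derivative f' t) (at t) \<and>
                                   (f' has_real_derivative f'' t) (at t)) \<and>
                     continuous_on S f'')"

definition locally_convex_metric :: "('a::real_vector \<Rightarrow> 'a \<Rightarrow> real) \<Rightarrow> bool" where
  "locally_convex_metric d \<longleftrightarrow>
     (\<forall>x. \<exists>r0>0. \<forall>r. 0 < r \<and> r < r0 \<longrightarrow> convex {y. d x y < r})"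

end

theory Submission
  imports Defs
begin

text \<open>
  For \<open>x = 0\<close> the ball is \<open>{y. \<phi> \<parallel>y\<parallel> < r}\<close> with \<open>\<phi> t = t / M 0 t\<close> nondecreasing (this is
  where \<open>M(0,t)/t\<close> decreasing enters), and such a radial sublevel set is convex.
  For \<open>x \<noteq> 0\<close> put \<open>f = M \<parallel>x\<parallel>\<close>; the ball is \<open>{y. \<parallel>x - y\<parallel> < r f \<parallel>y\<parallel>}\<close>. Since \<open>f\<close> grows at most
  linearly, for small \<open>r\<close> this set lies in the Euclidean ball of radius \<open>\<parallel>x\<parallel>/2\<close> around \<open>x\<close>,
  on which \<open>\<parallel>y\<parallel>\<close> ranges in \<open>[\<parallel>x\<parallel>/2, 3\<parallel>x\<parallel>/2]\<close>, and there it is the sublevel set \<open>{h < 0}\<close> of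
  \<open>h y = \<parallel>x - y\<parallel>\<^sup>2 - r\<^sup>2 f(\<parallel>y\<parallel>)\<^sup>2 = (\<parallel>x - y\<parallel>\<^sup>2 - r\<^sup>2 K \<parallel>y\<parallel>\<^sup>2) + r\<^sup>2 (K \<parallel>y\<parallel>\<^sup>2 - f(\<parallel>y\<parallel>)\<^sup>2)\<close>.
  As \<open>f\<close> is \<open>C\<^sup>2\<close>, a large \<open>K\<close> makes \<open>K t\<^sup>2 - f(t)\<^sup>2\<close> convex and nondecreasing on that interval,
  so the second summand is convex in \<open>y\<close>; the first is a convex quadratic once \<open>r\<^sup>2 K \<le> 1\<close>.
\<close>

lemma convex_sublevel_mono_comp_norm:
  fixes \<phi> :: "real \<Rightarrow> real"
  assumes "mono_on {0..} \<phi>"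
  shows "convex {y::'a::real_normed_vector. \<phi> (norm y) < r}"
proof (rule convexI)
  fix y1 y2 :: 'a and u v :: real
  assume y: "y1 \<in> {y. \<phi> (norm y) < r}" "y2 \<in> {y. \<phi> (norm y) < r}"
    and uv: "0 \<le> u" "0 \<le> v" "u + v = 1"
  have "norm (u *\<^sub>R y1 + v *\<^sub>R y2) \<le> max (norm y1) (norm y2)"
    using convex_lower[OF convex_on_dist[OF convex_UNIV, of 0] _ _ uv] by simp
  then have "\<phi> (norm (u *\<^sub>R y1 + v *\<^sub>R y2)) \<le> \<phi> (max (norm y1) (norm y2))"
    by (rule mono_onD[OF assms, rotated 2]) (auto simp: le_max_iff_disj)
  also have "\<dots> < r"
    using y by (simp add: max_def)
  finally show "u *\<^sub>R y1 + v *\<^sub>R y2 \<in> {y. \<phi> (norm y) < r}"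
    by simp
qed

lemma convex_sublevel_less:
  assumes "convex_on C h"
  shows "convex {y \<in> C. h y < r}"
proof (rule convexI)
  fix y1 y2 and u v :: real
  assume y: "y1 \<in> {y \<in> C. h y < r}" "y2 \<in> {y \<in> C. h y < r}"
    and uv: "0 \<le> u" "0 \<le> v" "u + v = 1"
  have "u *\<^sub>R y1 + v *\<^sub>R y2 \<in> C"
    using y uv convex_on_imp_convex[OF assms] by (auto intro: convexD)
  moreover have "h (u *\<^sub>R y1 + v *\<^sub>R y2) < r"
    using convex_lower[OF assms _ _ uv] y by fastforce
  ultimately show "u *\<^sub>R y1 + v *\<^sub>R y2 \<in> {y \<in> C. h y < r}"
    by simp
qed

lemma convex_on_mono_comp_norm:
  fixes p :: "real \<Rightarrow> real" and C :: "'a::real_normed_vector set"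
  assumes p: "convex_on I p" "mono_on I p" and C: "convex C" "norm ` C \<subseteq> I"
  shows "convex_on C (\<lambda>y. p (norm y))"
  unfolding convex_on_def
proof (intro conjI C ballI allI impI)
  fix y1 y2 :: 'a and u v :: real
  assume y: "y1 \<in> C" "y2 \<in> C" and uv: "0 \<le> u" "0 \<le> v" "u + v = 1"
  define w where "w = u * norm y1 + v * norm y2"
  have z: "norm (u *\<^sub>R y1 + v *\<^sub>R y2) \<in> I"
    using C y uv by (auto intro: convexD)
  have ny: "norm y1 \<in> I" "norm y2 \<in> I"
    using C(2) y by auto
  then have w: "w \<in> I"
    unfolding w_def using convexD[OF convex_on_imp_convex[OF p(1)]] uv by auto
  have "norm (u *\<^sub>R y1 + v *\<^sub>R y2) \<le> w"
    using norm_triangle_ineq[of "u *\<^sub>R y1" "v *\<^sub>R y2"] uv by (simp add: w_def)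
  then have "p (norm (u *\<^sub>R y1 + v *\<^sub>R y2)) \<le> p w"
    using p(2) z w by (rule mono_onD[rotated 3])
  also have "p w \<le> u * p (norm y1) + v * p (norm y2)"
    using p(1) ny uv unfolding w_def convex_on_def by simp
  finally show "p (norm (u *\<^sub>R y1 + v *\<^sub>R y2)) \<le> u * p (norm y1) + v * p (norm y2)" .
qed

lemma convex_on_norm_diff_square_minus:
  fixes x :: "'a::real_inner"
  assumes "c \<le> 1"
  shows "convex_on UNIV (\<lambda>y. norm (x - y)^2 - c * norm y^2)"
  unfolding convex_on_def
proof (intro conjI convex_UNIV ballI allI impI)
  fix y1 y2 :: 'a and u v :: real
  assume uv: "0 \<le> u" "0 \<le> v" "u + v = 1"
  then have v: "v = 1 - u" by simp
  have "u * (norm (x - y1)^2 - c * norm y1^2) + v * (norm (x - y2)^2 - c * norm y2^2)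
      - (norm (x - (u *\<^sub>R y1 + v *\<^sub>R y2))^2 - c * norm (u *\<^sub>R y1 + v *\<^sub>R y2)^2)
      = u * v * (1 - c) * norm (y1 - y2)^2"
    unfolding v power2_norm_eq_inner
    by (simp add: inner_commute algebra_simps power2_eq_square)
  moreover have "0 \<le> u * v * (1 - c) * norm (y1 - y2)^2"
    using assms uv by simp
  ultimately show "norm (x - (u *\<^sub>R y1 + v *\<^sub>R y2))^2 - c * norm (u *\<^sub>R y1 + v *\<^sub>R y2)^2
      \<le> u * (norm (x - y1)^2 - c * norm y1^2) + v * (norm (x - y2)^2 - c * norm y2^2)"
    by linarith
qed

lemma C2_on_power2:
  assumes "C2_on S f"
  shows "C2_on S (\<lambda>t. (f t)^2)"
proof -
  obtain f' f'' where d1: "\<And>t. t \<in> S \<Longrightarrow> (f has_real_derivative f' t) (at t)"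
    and d2: "\<And>t. t \<in> S \<Longrightarrow> (f' has_real_derivative f'' t) (at t)"
    and cont: "continuous_on S f''"
    using assms unfolding C2_on_def by blast
  have "((\<lambda>t. (f t)^2) has_real_derivative 2 * f t * f' t) (at t)"
    "((\<lambda>t. 2 * f t * f' t) has_real_derivative 2 * (f' t * f' t + f t * f'' t)) (at t)"
    if "t \<in> S" for t
    using d1[OF that] d2[OF that] by (auto intro!: derivative_eq_intros simp: algebra_simps)
  moreover have "continuous_on S (\<lambda>t. 2 * (f' t * f' t + f t * f'' t))"
    using has_real_derivative_imp_continuous_on[OF d1] has_real_derivative_imp_continuous_on[OF d2]
      cont by (intro continuous_intros)
  ultimately show ?thesis
    unfolding C2_on_def
    by (intro exI[of _ "\<lambda>t. 2 * f t * f' t"] exI[of _ "\<lambda>t. 2 * (f' t * f' t + f t * f'' t)"])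
      blast
qed

text \<open>\<open>0 < a\<close> is what lets \<open>2 K t\<close> dominate the bounded \<open>g' t\<close> on \<open>[a, b]\<close>.\<close>
lemma C2_on_convex_mono_correction:
  assumes "C2_on S g" "{a..b} \<subseteq> S" "0 < a"
  obtains K :: real where "0 \<le> K" "convex_on {a..b} (\<lambda>t. K * t^2 - g t)"
    "mono_on {a..b} (\<lambda>t. K * t^2 - g t)"
proof -
  obtain g' g'' where d1: "\<And>t. t \<in> S \<Longrightarrow> (g has_real_derivative g' t) (at t)"
    and d2: "\<And>t. t \<in> S \<Longrightarrow> (g' has_real_derivative g'' t) (at t)"
    and cont: "continuous_on S g''"
    using assms(1) unfolding C2_on_def by blast
  have "continuous_on {a..b} g'"
    using d2 assms(2) by (intro has_real_derivative_imp_continuous_on) blast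
  then obtain B1 where B1: "\<And>t. t \<in> {a..b} \<Longrightarrow> norm (g' t) \<le> B1"
    using continuous_on_compact_bound[OF compact_Icc] by metis
  obtain B2 where B2: "B2 \<ge> 0" "\<And>t. t \<in> {a..b} \<Longrightarrow> norm (g'' t) \<le> B2"
    using continuous_on_compact_bound[OF compact_Icc continuous_on_subset[OF cont assms(2)]] by metis
  define B where "B = max B1 B2"
  define K where "K = B / a + B"
  have B: "0 \<le> B" "\<And>t. t \<in> {a..b} \<Longrightarrow> g' t \<le> B \<and> g'' t \<le> B"
    using B1 B2 by (force simp: B_def)+
  have K: "0 \<le> K" "B \<le> K" "B \<le> 2 * K * a"
    using B(1) \<open>0 < a\<close> by (simp_all add: K_def field_simps)
  have d1K: "((\<lambda>t. K * t^2 - g t) has_real_derivative 2 * K * t - g' t) (at t)"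
    and d2K: "((\<lambda>t. 2 * K * t - g' t) has_real_derivative 2 * K - g'' t) (at t)"
    if "t \<in> {a..b}" for t
    using d1 d2 that assms(2) by (auto intro!: derivative_eq_intros)
  have d1K_nonneg: "0 \<le> 2 * K * t - g' t" if "t \<in> {a..b}" for t
  proof -
    have "2 * K * a \<le> 2 * K * t"
      using that K by (intro mult_left_mono) auto
    then show ?thesis
      using B(2)[OF that] K by linarith
  qed
  show ?thesis
  proof
    show "convex_on {a..b} (\<lambda>t. K * t^2 - g t)"
    proof (rule f''_ge0_imp_convex[OF convex_real_interval(5) d1K d2K])
      fix t assume "t \<in> {a..b}"
      then show "0 \<le> 2 * K - g'' t"
        using B(2)[of t] K by linarith
    qed
    show "mono_on {a..b} (\<lambda>t. K * t^2 - g t)"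
    proof (rule mono_onI)
      fix t1 t2 assume "t1 \<in> {a..b}" "t2 \<in> {a..b}" "t1 \<le> t2"
      then show "K * t1^2 - g t1 \<le> K * t2^2 - g t2"
        by (intro deriv_nonneg_imp_mono[OF d1K d1K_nonneg]) auto
    qed
  qed (fact K)
qed

lemma moderately_increasing_divide_mono:
  assumes "moderately_increasing f" "\<And>t. 0 < t \<Longrightarrow> 0 < f t"
  shows "mono_on {0..} (\<lambda>t. t / f t)"
proof (rule mono_onI)
  fix s t :: real assume "s \<in> {0..}" "t \<in> {0..}" "s \<le> t"
  then consider "s = 0" | "0 < s" "0 < t"
    by fastforce
  then show "s / f s \<le> t / f t"
  proof cases
    case 1
    then show ?thesis
      using assms(2)[of t] \<open>t \<in> {0..}\<close> by (cases "t = 0") auto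
  next
    case 2
    have "f t / t \<le> f s / s"
      using assms(1) 2 \<open>s \<le> t\<close> unfolding moderately_increasing_def by blast
    then show ?thesis
      using 2 assms(2)[of s] assms(2)[of t] by (simp add: field_simps)
  qed
qed

lemma moderately_increasing_pos:
  assumes "moderately_increasing f" "0 < s" "0 < f s" "0 < t"
  shows "0 < f t"
proof (cases "s \<le> t")
  case True
  then show ?thesis
    using assms unfolding moderately_increasing_def by (meson less_le_trans less_imp_le)
next
  case False
  then have "f s / s \<le> f t / t"
    using assms unfolding moderately_increasing_def by simp
  moreover have "0 < f s / s"
    using assms by simp
  ultimately have "0 < f t / t"
    by linarith
  then show ?thesis
    using \<open>0 < t\<close> by (simp add: zero_less_divide_iff)
qed

lemma moderately_increasing_le_linear:
  assumes "moderately_increasing f" "0 < s" "0 \<le> t"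
  shows "f t \<le> f s * max 1 (t / s)"
proof (cases "t \<le> s")
  case True
  then show ?thesis
    using assms unfolding moderately_increasing_def by (simp add: max_def)
next
  case False
  then have "f t / t \<le> f s / s"
    using assms unfolding moderately_increasing_def by simp
  then show ?thesis
    using False assms(2) by (simp add: max_def field_simps)
qed

lemma weighted_ball_subset_ball:
  fixes x y :: "'a::real_normed_vector"
  assumes f: "moderately_increasing f" "0 < f (norm x)"
    and x: "x \<noteq> 0" and r: "0 \<le> r" "r * f (norm x) \<le> norm x / 8"
    and y: "norm (x - y) < r * f (norm y)"
  shows "norm (x - y) < norm x / 2"
proof -
  define s d where "s = norm x" and "d = norm (x - y)"
  have s: "0 < s"
    using x by (simp add: s_def)
  have "norm y \<le> s + d"
    using norm_triangle_ineq4[of x "x - y"] by (simp add: s_def d_def)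
  then have max_le: "max 1 (norm y / s) \<le> 2 + d / s"
    using s by (simp add: field_simps d_def)
  have "d < r * f (norm y)"
    using y by (simp add: d_def)
  also have "\<dots> \<le> r * (f s * max 1 (norm y / s))"
    using moderately_increasing_le_linear[OF f(1) s] r(1) by (intro mult_left_mono) auto
  also have "\<dots> \<le> r * f s * (2 + d / s)"
    unfolding mult.assoc using max_le f(2) r(1) by (intro mult_left_mono) (auto simp: s_def)
  also have "\<dots> \<le> s / 8 * (2 + d / s)"
    using r(2) s by (intro mult_right_mono) (auto simp: s_def d_def)
  also have "\<dots> = s / 4 + d / 8"
    using s by (simp add: field_simps)
  finally have "d < s / 2"
    using s by linarith
  then show ?thesis
    by (simp add: s_def d_def)
qed

lemma norm_mem_ball_half:
  fixes x y :: "'a::real_normed_vector"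
  assumes "y \<in> ball x (norm x / 2)"
  shows "norm y \<in> {norm x / 2 .. 3 * norm x / 2}"
  using assms norm_triangle_ineq3[of x y] by (auto simp: dist_norm abs_le_iff)

lemma weighted_ball_eq_sublevel:
  fixes x :: "'a::real_normed_vector"
  assumes f: "moderately_increasing f" "0 < f (norm x)"
    and x: "x \<noteq> 0" and r: "0 < r" "r * f (norm x) \<le> norm x / 8"
  shows "{y. norm (x - y) < r * f (norm y)}
    = {y \<in> ball x (norm x / 2). norm (x - y)^2 - (r * f (norm y))^2 < 0}"
proof -
  have "norm (x - y) < r * f (norm y) \<longleftrightarrow> norm (x - y)^2 < (r * f (norm y))^2"
    if "y \<in> ball x (norm x / 2)" for y
  proof -
    have "norm x / 2 \<le> norm y"
      using norm_mem_ball_half[OF that] by simp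
    moreover have "0 < norm x"
      using x by simp
    ultimately have "0 < norm y"
      by linarith
    then have "0 < f (norm y)"
      using moderately_increasing_pos[OF f(1) _ f(2)] x by simp
    then show ?thesis
      using r by (simp add: not_le[symmetric])
  qed
  moreover have "y \<in> ball x (norm x / 2)" if "norm (x - y) < r * f (norm y)" for y
    using weighted_ball_subset_ball[OF f x _ r(2) that] r by (simp add: dist_norm)
  ultimately show ?thesis
    by auto
qed

lemma small_weighted_balls_convex:
  fixes x :: "'a::real_inner"
  assumes f: "moderately_increasing f" "C2_on {0<..} f" "0 < f (norm x)" and x: "x \<noteq> 0"
  shows "\<exists>r0>0. \<forall>r. 0 < r \<and> r < r0 \<longrightarrow> convex {y. norm (x - y) < r * f (norm y)}"
proof -
  define s B where "s = norm x" and "B = ball x (norm x / 2)"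
  have s: "0 < s"
    using x by (simp add: s_def)
  obtain K where K: "0 \<le> K" and p: "convex_on {s / 2 .. 3 * s / 2} (\<lambda>t. K * t^2 - (f t)^2)"
    "mono_on {s / 2 .. 3 * s / 2} (\<lambda>t. K * t^2 - (f t)^2)"
    using C2_on_convex_mono_correction[OF C2_on_power2[OF f(2)], of "s / 2" "3 * s / 2"] s
    by (auto simp: subset_eq)
  define r0 where "r0 = min (s / (8 * f s)) (1 / (K + 1))"
  have "0 < r0"
    using s f(3) K by (simp add: r0_def s_def)
  moreover have "convex {y. norm (x - y) < r * f (norm y)}" if r: "0 < r" "r < r0" for r
  proof -
    have rK: "r + K * r < 1"
      using r K by (simp add: r0_def field_simps)
    moreover have "0 \<le> K * r"
      using r K by simp
    ultimately have "r * (K * r) \<le> K * r"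
      using mult_left_le_one_le[of "K * r" r] r by linarith
    then have "r^2 * K \<le> 1"
      using rK r by (simp add: power2_eq_square algebra_simps)
    then have "convex_on B (\<lambda>y. (norm (x - y)^2 - r^2 * K * norm y^2)
        + r^2 * (K * norm y^2 - (f (norm y))^2))"
      using p norm_mem_ball_half[of _ x] r
      by (intro convex_on_add convex_on_cmul convex_on_mono_comp_norm
          convex_on_subset[OF convex_on_norm_diff_square_minus]) (auto simp: B_def s_def)
    moreover have "(norm (x - y)^2 - r^2 * K * norm y^2) + r^2 * (K * norm y^2 - (f (norm y))^2)
        = norm (x - y)^2 - (r * f (norm y))^2" for y
      by (simp add: algebra_simps)
    ultimately have "convex_on B (\<lambda>y. norm (x - y)^2 - (r * f (norm y))^2)"
      by simp
    then have "convex {y \<in> B. norm (x - y)^2 - (r * f (norm y))^2 < 0}"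
      by (rule convex_sublevel_less)
    moreover have "r * f s \<le> s / 8"
      using r f(3) by (simp add: r0_def s_def field_simps)
    ultimately show ?thesis
      using weighted_ball_eq_sublevel[OF f(1,3) x r(1)] by (simp add: B_def s_def)
  qed
  ultimately show ?thesis
    by blast
qed

lemma rhoM_denominator_pos:
  fixes x y :: "'a::euclidean_space"
  assumes nonneg: "\<And>s t. 0 \<le> s \<Longrightarrow> 0 \<le> t \<Longrightarrow> 0 \<le> M s t"
    and metric: "is_metric (rhoM M :: 'a \<Rightarrow> 'a \<Rightarrow> real)"
    and "x \<noteq> y"
  shows "0 < M (norm x) (norm y)"
proof -
  have "rhoM M x y \<noteq> 0"
    using metric \<open>x \<noteq> y\<close> unfolding is_metric_def by metis
  then show ?thesis
    using nonneg[of "norm x" "norm y"] by (auto simp: rhoM_def)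
qed

lemma rhoM_denominator_pos_diag:
  fixes x :: "'a::euclidean_space"
  assumes nonneg: "\<And>s t. 0 \<le> s \<Longrightarrow> 0 \<le> t \<Longrightarrow> 0 \<le> M s t"
    and metric: "is_metric (rhoM M :: 'a \<Rightarrow> 'a \<Rightarrow> real)"
    and "x \<noteq> 0"
  shows "0 < M (norm x) (norm x)"
proof -
  have "x \<noteq> - x"
    using \<open>x \<noteq> 0\<close> by (simp add: eq_neg_iff_add_eq_0 flip: scaleR_2)
  then show ?thesis
    using rhoM_denominator_pos[OF nonneg metric, of x "- x"] by simp
qed

lemma rhoM_less_iff:
  fixes x y :: "'a::euclidean_space"
  assumes nonneg: "\<And>s t. 0 \<le> s \<Longrightarrow> 0 \<le> t \<Longrightarrow> 0 \<le> M s t"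
    and metric: "is_metric (rhoM M :: 'a \<Rightarrow> 'a \<Rightarrow> real)"
    and "x \<noteq> 0" "0 < r"
  shows "rhoM M x y < r \<longleftrightarrow> norm (x - y) < r * M (norm x) (norm y)"
proof (cases "y = x")
  case True
  then show ?thesis
    using rhoM_denominator_pos_diag[OF nonneg metric \<open>x \<noteq> 0\<close>] \<open>0 < r\<close> by (simp add: rhoM_def)
next
  case False
  then show ?thesis
    using rhoM_denominator_pos[OF nonneg metric, of x y] by (auto simp: rhoM_def pos_divide_less_eq)
qed

lemma convex_rhoM_ball_zero:
  assumes nonneg: "\<And>s t. 0 \<le> s \<Longrightarrow> 0 \<le> t \<Longrightarrow> 0 \<le> M s t"
    and metric: "is_metric (rhoM M :: 'a::euclidean_space \<Rightarrow> 'a \<Rightarrow> real)"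
    and "moderately_increasing (M 0)"
  shows "convex {y::'a. rhoM M 0 y < r}"
proof -
  have "0 < M 0 t" if "0 < t" for t
  proof -
    obtain y :: 'a where "norm y = t"
      using vector_choose_size \<open>0 < t\<close> by (metis less_imp_le)
    then show ?thesis
      using rhoM_denominator_pos[OF nonneg metric, of 0 y] \<open>0 < t\<close> by auto
  qed
  then have "convex {y::'a. norm y / M 0 (norm y) < r}"
    by (intro convex_sublevel_mono_comp_norm moderately_increasing_divide_mono assms(3))
  then show ?thesis
    by (simp add: rhoM_def)
qed

theorem lemma5p5:
  fixes M :: "real \<Rightarrow> real \<Rightarrow> real"
  assumes nonneg: "\<And>s t. 0 \<le> s \<Longrightarrow> 0 \<le> t \<Longrightarrow> 0 \<le> M s t"
    and symm: "\<And>s t. 0 \<le> s \<Longrightarrow> 0 \<le> t \<Longrightarrow> M s t = M t s"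
    and modinc: "moderately_increasing2 M"
    and metric: "is_metric (rhoM M :: 'a::euclidean_space \<Rightarrow> 'a \<Rightarrow> real)"
    and C2: "\<And>x. 0 \<le> x \<Longrightarrow> C2_on {0<..} (\<lambda>t. M x t)"
  shows "locally_convex_metric (rhoM M :: 'a \<Rightarrow> 'a \<Rightarrow> real)"
  unfolding locally_convex_metric_def
proof
  fix x :: 'a
  have mi: "moderately_increasing (M (norm x))"
    using modinc unfolding moderately_increasing2_def by simp
  show "\<exists>r0>0. \<forall>r. 0 < r \<and> r < r0 \<longrightarrow> convex {y. rhoM M x y < r}"
  proof (cases "x = 0")
    case True
    then show ?thesis
      using convex_rhoM_ball_zero[OF nonneg metric] mi by (intro exI[of _ 1]) auto
  next
    case False
    obtain r0 where "0 < r0"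
      and "\<And>r. 0 < r \<Longrightarrow> r < r0 \<Longrightarrow> convex {y. norm (x - y) < r * M (norm x) (norm y)}"
      using small_weighted_balls_convex[OF mi C2 rhoM_denominator_pos_diag[OF nonneg metric False] False]
      by auto
    then show ?thesis
      using rhoM_less_iff[OF nonneg metric False] by auto
  qed
qed

end
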